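(* Let $d\ge2$, let $\mu\ge0$ be a finite measure with compact support in $\mathbb{R}^d$ and $\mu\ll\mathcal{L}^d$, let $\lambda,\varepsilon>0$, $p\ge1$, let $\varphi$ be a minimizer of $\mathcal{E}_\mu^{\lambda,\varepsilon,p}$ over $\mathcal{C}$, and let $t\in(0,L(\varphi))$. Then the mass projecting on $\{\varphi(t)\}$ in $\Gamma_\varphi$ is zero: $\mu\big(\pi_{\Gamma_\varphi}^{-1}(\{\varphi(t)\})\big)=0$.
   Context: $\mathcal{C}$ denotes the set of curves $\varphi:[0,a]\to\mathbb{R}^d$, $a\ge 0$, that are Lipschitz with $|\varphi'|=1$ a.e.; the length $L(\varphi)$ is its total variation, which equals $a$. $\Gamma_\varphi$ is the image of $\varphi$, $d(x,\Gamma)=\inf_{y\in\Gamma}|x-y|$, and $\kappa_\varphi=\varphi''$. The functional is $\mathcal{E}_\mu^{\lambda,\varepsilon,p}(\varphi)=\int d(x,\Gamma_\varphi)^p\,d\mu+\lambda L(\varphi)+\varepsilon\int_0^{L(\varphi)}|\kappa_\varphi|^2dt$ if $\varphi\in H^2([0,L(\varphi)];\mathbb{R}^d)\cap\mathcal{C}$ and $+\infty$ otherwise (a single-point curve has curvature term $0$). For a compact set $\Sigma$, $\Pi_\Sigma(x)=\{y\in\Sigma:|x-y|=d(x,\Sigma)\}$; when $\Pi_\Sigma(x)$ is a singleton $\{y\}$ one writes $\pi_\Sigma(x)=y$. For $B\subseteq\Sigma$, $\pi_\Sigma^{-1}(B):=\{x\in\mathbb{R}^d:\Pi_\Sigma(x)=\{y\}\text{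 for some }y\in B\}$, and $\mu(\pi_\Sigma^{-1}(B))$ is called the mass projecting on $B$ in $\Sigma$ (for $\mu\ll\mathcal{L}^d$ and $\Sigma$ a compact connected set of finite length, $\Pi_\Sigma(x)$ is a singleton for $\mu$-a.e. $x$). *)

theory Defs
  imports "HOL-Analysis.Analysis"
begin

text \<open>A curve is represented by its length a and a map phi :: real => 'a,
  of which only the restriction to [0,a] matters.\<close>

definition curve_class :: "real \<Rightarrow> (real \<Rightarrow> 'a::euclidean_space) \<Rightarrow> bool" where
  "curve_class a \<phi> \<longleftrightarrow> a \<ge> 0 \<and> (\<exists>C. lipschitz_on C {0..a} \<phi>) \<and>
     (AE t in lborel. t \<in> {0..a} \<longrightarrow>
        (\<exists>v. (\<phi> has_vector_derivative v) (at t within {0..a}) \<and> norm v = 1))"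

text \<open>H^2 on [0,a]: phi is the integral of an absolutely continuous phi1 whose
  derivative kappa is square integrable; kappa is then the second derivative.\<close>

definition H2_witness :: "real \<Rightarrow> (real \<Rightarrow> 'a::euclidean_space) \<Rightarrow> (real \<Rightarrow> 'a) \<Rightarrow> bool" where
  "H2_witness a \<phi> \<kappa> \<longleftrightarrow> \<kappa> \<in> borel_measurable lborel \<and>
     set_integrable lborel {0..a} \<kappa> \<and>
     set_integrable lborel {0..a} (\<lambda>s. norm (\<kappa> s) ^ 2) \<and>
     (\<exists>\<phi>1. set_integrable lborel {0..a} \<phi>1 \<and>
        (\<forall>t\<in>{0..a}. \<phi>1 t = \<phi>1 0 + (LINT s:{0..t}|lborel. \<kappa> s)) \<and>
        (\<forall>t\<in>{0..a}. \<phi> t = \<phi> 0 + (LINT s:{0..t}|lborel. \<phi>1 s)))"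

definition in_H2 :: "real \<Rightarrow> (real \<Rightarrow> 'a::euclidean_space) \<Rightarrow> bool" where
  "in_H2 a \<phi> \<longleftrightarrow> (\<exists>\<kappa>. H2_witness a \<phi> \<kappa>)"

definition curvature_energy :: "real \<Rightarrow> (real \<Rightarrow> 'a::euclidean_space) \<Rightarrow> real" where
  "curvature_energy a \<phi> =
     (LINT s:{0..a}|lborel. norm ((SOME \<kappa>. H2_witness a \<phi> \<kappa>) s) ^ 2)"

definition energy ::
  "'a::euclidean_space measure \<Rightarrow> real \<Rightarrow> real \<Rightarrow> real \<Rightarrow> real \<Rightarrow> (real \<Rightarrow> 'a) \<Rightarrow> ennreal" where
  "energy \<mu> lam eps p a \<phi> =
     (if curve_class a \<phi> \<and> in_H2 a \<phi> then
        (\<integral>\<^sup>+ x. ennreal (infdist x (\<phi> ` {0..a}) powr p) \<partial>\<mu>)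
        + ennreal (lam * a) + ennreal (eps * curvature_energy a \<phi>)
      else top)"

definition proj_preimage :: "'a::metric_space set \<Rightarrow> 'a set \<Rightarrow> 'a set" where
  "proj_preimage \<Sigma> B =
     {x. \<exists>y\<in>B. {z\<in>\<Sigma>. dist x z = infdist x \<Sigma>} = {y}}"

end

theory Submission
  imports Defs
begin

text \<open>A minimizer has finite energy, so it lies in \<open>H\<^sup>2\<close> and is therefore \<open>C\<^sup>1\<close> with unit
  speed. If the nearest point of \<open>\<Gamma>\<^sub>\<phi>\<close> to \<open>x\<close> is the interior point \<open>\<phi> t\<close>, then
  \<open>s \<mapsto> |x - \<phi> s|\<^sup>2\<close> has a local minimum at \<open>t\<close>, so \<open>x - \<phi> t\<close> is orthogonal to \<open>\<phi>' t \<noteq> 0\<close>.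
  Hence the mass projecting on \<open>\<phi> t\<close> lives on an affine hyperplane, which is Lebesgue-null.\<close>

lemma curve_class_point: "curve_class 0 (\<lambda>_. c)"
  unfolding curve_class_def
proof (intro conjI)
  show "\<exists>C. C-lipschitz_on {0..0} (\<lambda>_. c)" using lipschitz_on_constant by blast
  show "AE t in lborel. t \<in> {0..0::real} \<longrightarrow>
      (\<exists>v. ((\<lambda>_. c) has_vector_derivative v) (at t within {0..0}) \<and> norm v = 1)"
    using AE_lborel_singleton[of 0] by eventually_elim auto
qed simp

lemma in_H2_point: "in_H2 0 (\<lambda>_. c)"
  unfolding in_H2_def H2_witness_def
  by (rule exI[of _ "\<lambda>_. 0"]) (auto simp: set_integrable_def intro!: exI[of _ "\<lambda>_. 0"])

lemma energy_point_less_top: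
  fixes \<mu> :: "'a::euclidean_space measure"
  assumes "sets \<mu> = sets borel" "finite_measure \<mu>"
    and "compact K" "emeasure \<mu> (UNIV - K) = 0" "p \<ge> 0"
  shows "energy \<mu> lam eps p 0 (\<lambda>_. c) < top"
proof -
  obtain R where R: "\<And>x. x \<in> K \<Longrightarrow> norm x \<le> R"
    using assms(3) by (meson bounded_iff compact_imp_bounded)
  have "UNIV - K \<in> sets \<mu>"
    using assms(1,3) by (simp add: compact_imp_closed sets.compl_sets)
  then have "AE x in \<mu>. x \<in> K"
    by (intro AE_I'[of "UNIV - K"]) (use assms(4) in auto)
  then have "AE x in \<mu>. ennreal (infdist x ((\<lambda>_. c) ` {0..0::real}) powr p)
      \<le> ennreal ((R + norm c) powr p)"
  proof eventually_elim
    case (elim x)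
    have "infdist x ((\<lambda>_. c) ` {0..0::real}) = norm (x - c)"
      by (simp add: infdist_singleton dist_norm)
    also have "\<dots> \<le> R + norm c"
      using R[OF elim] norm_triangle_ineq4[of x c] by linarith
    finally show ?case using assms(5) by (simp add: powr_mono2 ennreal_leI)
  qed
  then have "(\<integral>\<^sup>+ x. ennreal (infdist x ((\<lambda>_. c) ` {0..0::real}) powr p) \<partial>\<mu>)
      \<le> (\<integral>\<^sup>+ x. ennreal ((R + norm c) powr p) \<partial>\<mu>)"
    by (rule nn_integral_mono_AE)
  also have "\<dots> < top"
    using finite_measure.emeasure_finite[OF assms(2), of "space \<mu>"]
    by (simp add: nn_integral_const ennreal_mult_less_top top.not_eq_extremum)
  finally show ?thesis
    using curve_class_point[of c] in_H2_point[of c] unfolding energy_def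
    by (simp add: ennreal_add_less_top)
qed

lemma in_H2_if_energy_less_top: "energy \<mu> lam eps p a \<phi> < top \<Longrightarrow> in_H2 a \<phi>"
  unfolding energy_def by (auto split: if_splits)

lemma set_integral_Icc_eq_integral:
  fixes f :: "real \<Rightarrow> 'a::euclidean_space"
  assumes "set_integrable lborel {a..b} f" "s \<in> {a..b}"
  shows "(LINT u:{a..s}|lborel. f u) = integral {a..s} f"
  using assms by (intro set_borel_integral_eq_integral(2) set_integrable_subset[OF assms(1)]) auto

lemma continuous_on_indefinite_set_integral:
  fixes f :: "real \<Rightarrow> 'a::euclidean_space"
  assumes "set_integrable lborel {a..b} f"
  shows "continuous_on {a..b} (\<lambda>s. LINT u:{a..s}|lborel. f u)"
  using indefinite_integral_continuous_1[OF set_borel_integral_eq_integral(1)[OF assms]]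
  by (rule continuous_on_eq) (simp add: set_integral_Icc_eq_integral[OF assms])

lemma indefinite_set_integral_has_vector_derivative:
  fixes f :: "real \<Rightarrow> 'a::euclidean_space"
  assumes "set_integrable lborel {a..b} f" "continuous_on {a..b} f" "s \<in> {a<..<b}"
  shows "((\<lambda>s. LINT u:{a..s}|lborel. f u) has_vector_derivative f s) (at s)"
proof -
  have "((\<lambda>s. integral {a..s} f) has_vector_derivative f s) (at s)"
    using integral_has_vector_derivative[OF assms(2), of s] assms(3)
    by (simp add: at_within_Icc_at)
  then show ?thesis
    by (rule has_vector_derivative_transform_within_open[OF _ open_greaterThanLessThan assms(3)])
      (simp add: set_integral_Icc_eq_integral[OF assms(1)])
qed

lemma H2_witness_imp_C1:
  assumes "H2_witness a \<phi> \<kappa>"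
  obtains \<phi>' where "continuous_on {0..a} \<phi>'"
    and "\<And>s. s \<in> {0<..<a} \<Longrightarrow> (\<phi> has_vector_derivative \<phi>' s) (at s)"
proof -
  obtain \<phi>' where \<kappa>: "set_integrable lborel {0..a} \<kappa>"
    and \<phi>'_int: "set_integrable lborel {0..a} \<phi>'"
    and \<phi>'_eq: "\<forall>s\<in>{0..a}. \<phi>' s = \<phi>' 0 + (LINT u:{0..s}|lborel. \<kappa> u)"
    and \<phi>_eq: "\<forall>s\<in>{0..a}. \<phi> s = \<phi> 0 + (LINT u:{0..s}|lborel. \<phi>' u)"
    using assms unfolding H2_witness_def by (elim conjE exE) blast
  have "continuous_on {0..a} (\<lambda>s. \<phi>' 0 + (LINT u:{0..s}|lborel. \<kappa> u))"
    using continuous_on_indefinite_set_integral[OF \<kappa>] by (intro continuous_intros)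
  then have cont: "continuous_on {0..a} \<phi>'"
    by (rule continuous_on_eq) (auto intro!: \<phi>'_eq[rule_format, symmetric])
  have "(\<phi> has_vector_derivative \<phi>' s) (at s)" if "s \<in> {0<..<a}" for s
  proof (rule has_vector_derivative_transform_within_open[OF _ open_greaterThanLessThan that])
    show "((\<lambda>s. \<phi> 0 + (LINT u:{0..s}|lborel. \<phi>' u)) has_vector_derivative \<phi>' s) (at s)"
      using indefinite_set_integral_has_vector_derivative[OF \<phi>'_int cont that]
      by (rule has_vector_derivative_add[OF has_vector_derivative_const, simplified])
  qed (auto intro!: \<phi>_eq[rule_format, symmetric])
  with cont show ?thesis using that by blast
qed

lemma AE_lborel_eq_imp_eq_on_open:
  fixes f :: "'a::euclidean_space \<Rightarrow> 'b::t1_space"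
  assumes "open U" "continuous_on U f" "AE x in lborel. x \<in> U \<longrightarrow> f x = c" "x \<in> U"
  shows "f x = c"
proof -
  obtain N where N: "N \<in> null_sets lborel" "{x. \<not> (x \<in> U \<longrightarrow> f x = c)} \<subseteq> N"
    using assms(3) unfolding eventually_ae_filter by auto
  have "negligible N"
    using null_sets_completionI[OF N(1)] by (simp add: negligible_iff_null_sets)
  then have "negligible (U \<inter> f -` (- {c}))"
    by (rule negligible_subset) (use N(2) in auto)
  moreover have "open (U \<inter> f -` (- {c}))"
    by (rule continuous_open_preimage[OF assms(2,1)]) auto
  ultimately have "U \<inter> f -` (- {c}) = {}"
    using open_not_negligible by blast
  then show ?thesis using assms(4) by blast
qed

lemma curve_class_unit_speed:
  assumes "curve_class a \<phi>" "continuous_on {0..a} \<phi>'"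
    and "\<And>s. s \<in> {0<..<a} \<Longrightarrow> (\<phi> has_vector_derivative \<phi>' s) (at s)"
    and "t \<in> {0<..<a}"
  shows "norm (\<phi>' t) = 1"
proof (rule AE_lborel_eq_imp_eq_on_open[of "{0<..<a}" "\<lambda>s. norm (\<phi>' s)"])
  show "continuous_on {0<..<a} (\<lambda>s. norm (\<phi>' s))"
    using assms(2) by (intro continuous_intros) (auto elim: continuous_on_subset)
  have "AE s in lborel. s \<in> {0..a} \<longrightarrow>
      (\<exists>v. (\<phi> has_vector_derivative v) (at s within {0..a}) \<and> norm v = 1)"
    using assms(1) unfolding curve_class_def by blast
  then show "AE s in lborel. s \<in> {0<..<a} \<longrightarrow> norm (\<phi>' s) = 1"
  proof eventually_elim
    case (elim s)
    show ?case
    proof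
      assume s: "s \<in> {0<..<a}"
      then obtain v where "(\<phi> has_vector_derivative v) (at s)" "norm v = 1"
        using elim by (auto simp: at_within_Icc_at)
      then show "norm (\<phi>' s) = 1"
        using vector_derivative_unique_at assms(3)[OF s] by metis
    qed
  qed
qed (use assms(4) in auto)

lemma nearest_point_orthogonal_derivative:
  fixes \<gamma> :: "real \<Rightarrow> 'a::real_inner"
  assumes "(\<gamma> has_vector_derivative v) (at t)" "t \<in> interior S"
    and "\<And>s. s \<in> S \<Longrightarrow> dist x (\<gamma> t) \<le> dist x (\<gamma> s)"
  shows "v \<bullet> x = v \<bullet> \<gamma> t"
proof -
  obtain d where d: "d > 0" "ball t d \<subseteq> S"
    using assms(2) by (meson mem_interior)
  define g where "g s = (x - \<gamma> s) \<bullet> (x - \<gamma> s)" for s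
  have "((\<lambda>s. x - \<gamma> s) has_derivative (\<lambda>h. - (h *\<^sub>R v))) (at t)"
    using has_derivative_diff[OF has_derivative_const[of x] assms(1)[unfolded has_vector_derivative_def]]
    by simp
  from has_derivative_inner[OF this this]
  have "(g has_real_derivative - 2 * ((x - \<gamma> t) \<bullet> v)) (at t)"
    unfolding g_def has_field_derivative_def
    by (rule has_derivative_eq_rhs) (auto simp: fun_eq_iff inner_commute algebra_simps)
  then have "- 2 * ((x - \<gamma> t) \<bullet> v) = 0"
  proof (rule DERIV_local_min[OF _ d(1)], intro allI impI)
    fix s assume "\<bar>t - s\<bar> < d"
    then have "s \<in> S" using d(2) by (auto simp: dist_real_def)
    then show "g t \<le> g s"
      using assms(3) unfolding g_def
      by (simp add: dist_norm power_mono flip: power2_norm_eq_inner)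
  qed
  then show ?thesis by (simp add: inner_diff_right inner_commute)
qed

lemma proj_preimage_subset_normal_hyperplane:
  fixes \<phi> :: "real \<Rightarrow> 'a::euclidean_space"
  assumes "(\<phi> has_vector_derivative v) (at t)" "t \<in> {0<..<a}"
  shows "proj_preimage (\<phi> ` {0..a}) {\<phi> t} \<subseteq> {x. v \<bullet> x = v \<bullet> \<phi> t}"
proof
  fix x assume "x \<in> proj_preimage (\<phi> ` {0..a}) {\<phi> t}"
  then have "dist x (\<phi> t) = infdist x (\<phi> ` {0..a})"
    unfolding proj_preimage_def by auto
  then have "dist x (\<phi> t) \<le> dist x (\<phi> s)" if "s \<in> {0..a}" for s
    using that by (simp add: infdist_le)
  moreover have "t \<in> interior {0..a}" using assms(2) by simp
  ultimately have "v \<bullet> x = v \<bullet> \<phi> t"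
    by (intro nearest_point_orthogonal_derivative[OF assms(1)])
  then show "x \<in> {x. v \<bullet> x = v \<bullet> \<phi> t}" by simp
qed

lemma hyperplane_null_sets_absolutely_continuous:
  fixes \<mu> :: "'a::euclidean_space measure"
  assumes "absolutely_continuous lborel \<mu>" "v \<noteq> 0"
  shows "{x. v \<bullet> x = c} \<in> null_sets \<mu>"
proof -
  have "{x. v \<bullet> x = c} \<in> null_sets lebesgue"
    using negligible_hyperplane[of v c] assms(2) by (simp add: negligible_iff_null_sets)
  moreover have "{x. v \<bullet> x = c} \<in> sets borel"
    by (intro borel_closed closed_hyperplane)
  ultimately have "{x. v \<bullet> x = c} \<in> null_sets lborel"
    by (metis null_sets_completion_iff sets_lborel)
  then show ?thesis using assms(1) unfolding absolutely_continuous_def by auto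
qed

theorem corollary3p2:
  fixes \<mu> :: "'a::euclidean_space measure"
    and lam eps p a t :: real and \<phi> :: "real \<Rightarrow> 'a"
  assumes "DIM('a) \<ge> 2"
    and "sets \<mu> = sets borel"
    and "finite_measure \<mu>"
    and "\<exists>K. compact K \<and> emeasure \<mu> (UNIV - K) = 0"
    and "absolutely_continuous lborel \<mu>"
    and "lam > 0" and "eps > 0" and "p \<ge> 1"
    and "curve_class a \<phi>"
    and "\<forall>b \<psi>. curve_class b \<psi> \<longrightarrow> energy \<mu> lam eps p a \<phi> \<le> energy \<mu> lam eps p b \<psi>"
    and "t \<in> {0<..<a}"
  shows "\<exists>N\<in>null_sets \<mu>. proj_preimage (\<phi> ` {0..a}) {\<phi> t} \<subseteq> N"
proof -
  obtain K where K: "compact K" "emeasure \<mu> (UNIV - K) = 0" using assms(4) by blast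
  have "energy \<mu> lam eps p a \<phi> \<le> energy \<mu> lam eps p 0 (\<lambda>_. 0)"
    using assms(10) curve_class_point by blast
  also have "\<dots> < top"
    using energy_point_less_top[OF assms(2,3) K] assms(8) by simp
  finally obtain \<kappa> where "H2_witness a \<phi> \<kappa>"
    using in_H2_if_energy_less_top unfolding in_H2_def by blast
  then obtain \<phi>' where cont: "continuous_on {0..a} \<phi>'"
    and der: "\<And>s. s \<in> {0<..<a} \<Longrightarrow> (\<phi> has_vector_derivative \<phi>' s) (at s)"
    by (rule H2_witness_imp_C1) blast
  have "\<phi>' t \<noteq> 0"
    using curve_class_unit_speed[OF assms(9) cont der assms(11)] by auto
  then show ?thesis
    using hyperplane_null_sets_absolutely_continuous[OF assms(5)]
      proj_preimage_subset_normal_hyperplane[OF der[OF assms(11)] assms(11)] by blast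
qed

end
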